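(* Let $X$ be a topological space, $G$ a groupoid on $X$, and let $W$ be a subgroupoid of $G$ with object set $X$ which is compatible locally trivial. Then $G$ has a topology making it a topological groupoid (with object space $X$) such that $W$ is open in $G$.
   Context: Groupoid conventions: a groupoid $G$ on object set $O_G$ has source and target maps $\alpha,\beta\colon G\rightarrow O_G$, identities $1_x$; the product $ab$ is defined iff $\beta(a)=\alpha(b)$. The star of $x$ is $G_x=\{a\in G\colon\alpha(a)=x\}$. A subgroupoid is a subset closed under products and inverses and containing the identities of its objects. A topological groupoid is a groupoid with topologies on $G$ and $O_G$ making source, target, identity map, inversion and partial multiplication continuous. Compatible locally trivial: Let $X$ be a topological space and $G$ a groupoid on $X$. Suppose $\mathcal U=\{U_i\colon i\in I\}$ is an open cover of $X$ which is also a base for its topology, and for each $i$ and each $x\in U_i$ there is a map (local section about $x$) $s_{x,i}\colon U_i\to G_x$ with $\beta(s_{x,i}(y))=y$ for $y\in U_i$ and $s_{x,i}(x)=1_x$. $G$ is compatible locally trivial if for every $x$ and any two local sections $s_{x,i}, s_{x,j}$ about $x$ there is $V_{ij}\in\mathcal U$ with $x\in V_{ij}\subseteq U_i\cap U_j$ and $s_{x,i}|_{V_{ij}}=s_{x,j}|_{V_{ij}}$. *)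

theory Defs
  imports "HOL-Analysis.Analysis"
begin

definition groupoid ::
  "'a set \<Rightarrow> 'b set \<Rightarrow> ('a \<Rightarrow> 'b) \<Rightarrow> ('a \<Rightarrow> 'b) \<Rightarrow> ('b \<Rightarrow> 'a)
   \<Rightarrow> ('a \<Rightarrow> 'a) \<Rightarrow> ('a \<Rightarrow> 'a \<Rightarrow> 'a) \<Rightarrow> bool" where
  "groupoid G X src tgt ide iv mul \<longleftrightarrow>
     (\<forall>a\<in>G. src a \<in> X \<and> tgt a \<in> X) \<and>
     (\<forall>x\<in>X. ide x \<in> G \<and> src (ide x) = x \<and> tgt (ide x) = x) \<and>
     (\<forall>a\<in>G. \<forall>b\<in>G. tgt a = src b \<longrightarrow>
        mul a b \<in> G \<and> src (mul a b) = src a \<and> tgt (mul a b) = tgt b) \<and>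
     (\<forall>a\<in>G. \<forall>b\<in>G. \<forall>c\<in>G. tgt a = src b \<and> tgt b = src c \<longrightarrow>
        mul (mul a b) c = mul a (mul b c)) \<and>
     (\<forall>a\<in>G. mul (ide (src a)) a = a \<and> mul a (ide (tgt a)) = a) \<and>
     (\<forall>a\<in>G. iv a \<in> G \<and> src (iv a) = tgt a \<and> tgt (iv a) = src a \<and>
        mul a (iv a) = ide (src a) \<and> mul (iv a) a = ide (tgt a))"

definition star :: "'a set \<Rightarrow> ('a \<Rightarrow> 'b) \<Rightarrow> 'b \<Rightarrow> 'a set" where
  "star G src x = {a \<in> G. src a = x}"

definition wide_subgroupoid ::
  "'a set \<Rightarrow> 'a set \<Rightarrow> 'b set \<Rightarrow> ('a \<Rightarrow> 'b) \<Rightarrow> ('a \<Rightarrow> 'b) \<Rightarrow> ('b \<Rightarrow> 'a)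
   \<Rightarrow> ('a \<Rightarrow> 'a) \<Rightarrow> ('a \<Rightarrow> 'a \<Rightarrow> 'a) \<Rightarrow> bool" where
  "wide_subgroupoid W G X src tgt ide iv mul \<longleftrightarrow>
     W \<subseteq> G \<and>
     (\<forall>a\<in>W. \<forall>b\<in>W. tgt a = src b \<longrightarrow> mul a b \<in> W) \<and>
     (\<forall>a\<in>W. iv a \<in> W) \<and>
     (\<forall>x\<in>X. ide x \<in> W)"

text \<open>The open cover \<U> is also a base of T; s x U is the
  chosen local section about x on U \<in> \<U> (for x \<in> U).\<close>
definition compatible_locally_trivial ::
  "'b topology \<Rightarrow> 'a set \<Rightarrow> ('a \<Rightarrow> 'b) \<Rightarrow> ('a \<Rightarrow> 'b) \<Rightarrow> ('b \<Rightarrow> 'a) \<Rightarrow> bool" where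
  "compatible_locally_trivial T W src tgt ide \<longleftrightarrow>
     (\<exists>\<U> s.
        (\<forall>U\<in>\<U>. openin T U) \<and> \<Union>\<U> = topspace T \<and>
        (\<forall>V x. openin T V \<and> x \<in> V \<longrightarrow> (\<exists>U\<in>\<U>. x \<in> U \<and> U \<subseteq> V)) \<and>
        (\<forall>U\<in>\<U>. \<forall>x\<in>U.
           (\<forall>y\<in>U. s x U y \<in> star W src x \<and> tgt (s x U y) = y) \<and> s x U x = ide x) \<and>
        (\<forall>x. \<forall>U\<in>\<U>. \<forall>U'\<in>\<U>. x \<in> U \<and> x \<in> U' \<longrightarrow>
           (\<exists>V\<in>\<U>. x \<in> V \<and> V \<subseteq> U \<inter> U' \<and> (\<forall>y\<in>V. s x U y = s x U' y))))"

definition topological_groupoid ::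
  "'a topology \<Rightarrow> 'b topology \<Rightarrow> ('a \<Rightarrow> 'b) \<Rightarrow> ('a \<Rightarrow> 'b) \<Rightarrow> ('b \<Rightarrow> 'a)
   \<Rightarrow> ('a \<Rightarrow> 'a) \<Rightarrow> ('a \<Rightarrow> 'a \<Rightarrow> 'a) \<Rightarrow> bool" where
  "topological_groupoid \<tau> T src tgt ide iv mul \<longleftrightarrow>
     groupoid (topspace \<tau>) (topspace T) src tgt ide iv mul \<and>
     continuous_map \<tau> T src \<and> continuous_map \<tau> T tgt \<and>
     continuous_map T \<tau> ide \<and> continuous_map \<tau> \<tau> iv \<and>
     continuous_map
       (subtopology (prod_topology \<tau> \<tau>)
          {(a, b). a \<in> topspace \<tau> \<and> b \<in> topspace \<tau> \<and> tgt a = src b})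
       \<tau> (\<lambda>(a, b). mul a b)"

end

theory Submission
  imports Defs
begin

text \<open>Local sections of \<open>W\<close> make its orbits open. Hence one can choose for every object \<open>y\<close> an arrow
  \<open>\<sigma> y \<in> W\<close> ending at \<open>y\<close> whose source, a base point of the orbit of \<open>y\<close>, depends
  locally constantly on \<open>y\<close>. Conjugation \<open>core a = \<sigma>(src a) \<cdot> a \<cdot> \<sigma>(tgt a)\<inverse>\<close> is then a functor
  onto arrows between base points, and \<open>G\<close> gets the coarsest topology making
  \<open>a \<mapsto> (src a, tgt a, core a)\<close> continuous into \<open>X \<times> X \<times> G\<close>, the last factor carrying
  the discrete topology. Functoriality of \<open>core\<close> gives continuity of multiplication and
  inversion, local constancy of the base point gives continuity of the identity map, and \<open>W\<close>
  is open because \<open>a \<in> W\<close> iff \<open>core a \<in> W\<close>.\<close>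

lemma wide_subgroupoidD:
  assumes "wide_subgroupoid W G X src tgt ide iv mul"
  shows wide_subgroupoid_subset: "a \<in> W \<Longrightarrow> a \<in> G"
    and wide_subgroupoid_mul: "\<lbrakk>a \<in> W; b \<in> W; tgt a = src b\<rbrakk> \<Longrightarrow> mul a b \<in> W"
    and wide_subgroupoid_iv: "a \<in> W \<Longrightarrow> iv a \<in> W"
    and wide_subgroupoid_ide: "x \<in> X \<Longrightarrow> ide x \<in> W"
  using assms unfolding wide_subgroupoid_def by auto

locale groupoid_on =
  fixes G :: "'a set" and X :: "'b set" and src tgt :: "'a \<Rightarrow> 'b" and ide :: "'b \<Rightarrow> 'a"
    and iv :: "'a \<Rightarrow> 'a" and mul :: "'a \<Rightarrow> 'a \<Rightarrow> 'a"
  assumes groupoid: "groupoid G X src tgt ide iv mul"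
begin

lemma src_closed [simp]: "a \<in> G \<Longrightarrow> src a \<in> X"
  and tgt_closed [simp]: "a \<in> G \<Longrightarrow> tgt a \<in> X"
  and ide_closed [simp]: "x \<in> X \<Longrightarrow> ide x \<in> G"
  and src_ide [simp]: "x \<in> X \<Longrightarrow> src (ide x) = x"
  and tgt_ide [simp]: "x \<in> X \<Longrightarrow> tgt (ide x) = x"
  and mul_closed [simp]: "\<lbrakk>a \<in> G; b \<in> G; tgt a = src b\<rbrakk> \<Longrightarrow> mul a b \<in> G"
  and src_mul [simp]: "\<lbrakk>a \<in> G; b \<in> G; tgt a = src b\<rbrakk> \<Longrightarrow> src (mul a b) = src a"
  and tgt_mul [simp]: "\<lbrakk>a \<in> G; b \<in> G; tgt a = src b\<rbrakk> \<Longrightarrow> tgt (mul a b) = tgt b"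
  and mul_assoc [simp]: "\<lbrakk>a \<in> G; b \<in> G; c \<in> G; tgt a = src b; tgt b = src c\<rbrakk>
      \<Longrightarrow> mul (mul a b) c = mul a (mul b c)"
  and iv_closed [simp]: "a \<in> G \<Longrightarrow> iv a \<in> G"
  and src_iv [simp]: "a \<in> G \<Longrightarrow> src (iv a) = tgt a"
  and tgt_iv [simp]: "a \<in> G \<Longrightarrow> tgt (iv a) = src a"
  and mul_iv_right [simp]: "a \<in> G \<Longrightarrow> mul a (iv a) = ide (src a)"
  and mul_iv_left [simp]: "a \<in> G \<Longrightarrow> mul (iv a) a = ide (tgt a)"
  using groupoid unfolding groupoid_def by auto

lemma mul_ide_left [simp]: "\<lbrakk>a \<in> G; x = src a\<rbrakk> \<Longrightarrow> mul (ide x) a = a"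
  and mul_ide_right [simp]: "\<lbrakk>a \<in> G; x = tgt a\<rbrakk> \<Longrightarrow> mul a (ide x) = a"
  using groupoid unfolding groupoid_def by auto

lemma iv_mul_cancel [simp]: "\<lbrakk>a \<in> G; b \<in> G; tgt a = src b\<rbrakk> \<Longrightarrow> mul (iv a) (mul a b) = b"
  by (simp flip: mul_assoc)

lemma mul_iv_cancel [simp]: "\<lbrakk>a \<in> G; b \<in> G; src a = src b\<rbrakk> \<Longrightarrow> mul a (mul (iv a) b) = b"
  by (simp flip: mul_assoc)

lemma iv_unique: "\<lbrakk>a \<in> G; b \<in> G; tgt a = src b; mul a b = ide (src a)\<rbrakk> \<Longrightarrow> b = iv a"
  by (metis iv_mul_cancel mul_ide_right iv_closed tgt_iv)

lemma iv_iv [simp]: "a \<in> G \<Longrightarrow> iv (iv a) = a"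
  by (rule iv_unique [symmetric]) auto

lemma iv_mul: "\<lbrakk>a \<in> G; b \<in> G; tgt a = src b\<rbrakk> \<Longrightarrow> iv (mul a b) = mul (iv b) (iv a)"
  by (rule iv_unique [symmetric]) auto

lemma subgroupoid_orbit_cong:
  assumes W: "wide_subgroupoid W G X src tgt ide iv mul" and w: "w \<in> W"
  shows "(\<exists>v\<in>W. src v = x \<and> tgt v = src w) \<longleftrightarrow> (\<exists>v\<in>W. src v = x \<and> tgt v = tgt w)"
proof -
  note W_mul = wide_subgroupoid_mul [OF W] and W_iv = wide_subgroupoid_iv [OF W]
    and W_G = wide_subgroupoid_subset [OF W]
  show ?thesis
  proof
    assume "\<exists>v\<in>W. src v = x \<and> tgt v = src w"
    then obtain v where "v \<in> W" "src v = x" "tgt v = src w" by blast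
    with w show "\<exists>v\<in>W. src v = x \<and> tgt v = tgt w"
      by (intro bexI [of _ "mul v w"]) (auto intro: W_mul simp: W_G)
  next
    assume "\<exists>v\<in>W. src v = x \<and> tgt v = tgt w"
    then obtain v where "v \<in> W" "src v = x" "tgt v = tgt w" by blast
    with w show "\<exists>v\<in>W. src v = x \<and> tgt v = src w"
      by (intro bexI [of _ "mul v (iv w)"]) (auto intro: W_mul W_iv simp: W_G)
  qed
qed

lemma subgroupoid_section_with_locally_constant_base:
  assumes W: "wide_subgroupoid W G X src tgt ide iv mul"
    and orbits_open: "\<And>x. x \<in> X \<Longrightarrow> \<exists>U. openin T U \<and> x \<in> U \<and> (\<forall>y\<in>U. \<exists>w\<in>W. src w = x \<and> tgt w = y)"
  obtains \<sigma> where "\<And>y. y \<in> X \<Longrightarrow> \<sigma> y \<in> W \<and> tgt (\<sigma> y) = y"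
    and "\<And>y. y \<in> X \<Longrightarrow> \<exists>U. openin T U \<and> y \<in> U \<and> (\<forall>z\<in>U. src (\<sigma> z) = src (\<sigma> y))"
proof -
  define base where "base z = (SOME x. \<exists>w\<in>W. src w = x \<and> tgt w = z)" for z
  define \<sigma> where "\<sigma> z = (SOME w. w \<in> W \<and> src w = base z \<and> tgt w = z)" for z
  have \<sigma>: "\<sigma> z \<in> W \<and> src (\<sigma> z) = base z \<and> tgt (\<sigma> z) = z" if "w \<in> W" "tgt w = z" for w z
  proof -
    have "\<exists>x. \<exists>v\<in>W. src v = x \<and> tgt v = z"
      using that by blast
    then have "\<exists>v\<in>W. src v = base z \<and> tgt v = z"
      unfolding base_def by (rule someI_ex)
    then have "\<exists>v. v \<in> W \<and> src v = base z \<and> tgt v = z"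
      by blast
    then show ?thesis
      unfolding \<sigma>_def by (rule someI_ex)
  qed
  have base_cong: "base (src w) = base (tgt w)" if "w \<in> W" for w
    unfolding base_def using subgroupoid_orbit_cong [OF W that] by simp
  show thesis
  proof (rule that)
    fix y assume y: "y \<in> X"
    have ide_y: "ide y \<in> W"
      by (rule wide_subgroupoid_ide [OF W y])
    then show "\<sigma> y \<in> W \<and> tgt (\<sigma> y) = y"
      using \<sigma> [of "ide y" y] y by simp
    obtain U where U: "openin T U" "y \<in> U" and reach: "\<forall>z\<in>U. \<exists>w\<in>W. src w = y \<and> tgt w = z"
      using orbits_open [OF y] by blast
    have "src (\<sigma> z) = src (\<sigma> y)" if "z \<in> U" for z
    proof -
      obtain w where "w \<in> W" "src w = y" "tgt w = z"
        using reach \<open>z \<in> U\<close> by blast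
      then show ?thesis
        using \<sigma> [of w z] \<sigma> [of "ide y" y] ide_y y base_cong by auto
    qed
    with U show "\<exists>U. openin T U \<and> y \<in> U \<and> (\<forall>z\<in>U. src (\<sigma> z) = src (\<sigma> y))"
      by blast
  qed
qed

end

locale groupoid_section = groupoid_on +
  fixes \<sigma> :: "'b \<Rightarrow> 'a"
  assumes section_closed [simp]: "y \<in> X \<Longrightarrow> \<sigma> y \<in> G"
    and tgt_section [simp]: "y \<in> X \<Longrightarrow> tgt (\<sigma> y) = y"
begin

definition core :: "'a \<Rightarrow> 'a" where
  "core a = mul (mul (\<sigma> (src a)) a) (iv (\<sigma> (tgt a)))"

lemma core_closed [simp]: "a \<in> G \<Longrightarrow> core a \<in> G"
  and src_core [simp]: "a \<in> G \<Longrightarrow> src (core a) = src (\<sigma> (src a))"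
  and tgt_core [simp]: "a \<in> G \<Longrightarrow> tgt (core a) = src (\<sigma> (tgt a))"
  unfolding core_def by simp_all

lemma core_mul: "\<lbrakk>a \<in> G; b \<in> G; tgt a = src b\<rbrakk> \<Longrightarrow> core (mul a b) = mul (core a) (core b)"
  unfolding core_def by simp

lemma core_iv: "a \<in> G \<Longrightarrow> core (iv a) = iv (core a)"
  unfolding core_def by (simp add: iv_mul)

lemma core_ide: "y \<in> X \<Longrightarrow> core (ide y) = ide (src (\<sigma> y))"
  unfolding core_def by simp

lemma arrow_from_core: "a \<in> G \<Longrightarrow> a = mul (iv (\<sigma> (src a))) (mul (core a) (\<sigma> (tgt a)))"
  unfolding core_def by simp

lemma core_in_subgroupoid_iff:
  assumes W: "wide_subgroupoid W G X src tgt ide iv mul" and \<sigma>_W: "\<And>y. y \<in> X \<Longrightarrow> \<sigma> y \<in> W"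
    and a: "a \<in> G"
  shows "core a \<in> W \<longleftrightarrow> a \<in> W"
proof -
  note W_mul = wide_subgroupoid_mul [OF W] and W_iv = wide_subgroupoid_iv [OF W]
    and W_G = wide_subgroupoid_subset [OF W]
  show ?thesis
  proof
    assume "core a \<in> W"
    then have "mul (iv (\<sigma> (src a))) (mul (core a) (\<sigma> (tgt a))) \<in> W"
      using a by (intro W_mul W_iv \<sigma>_W) auto
    then show "a \<in> W"
      using a by (simp flip: arrow_from_core)
  next
    assume "a \<in> W"
    then show "core a \<in> W"
      using a unfolding core_def by (intro W_mul W_iv \<sigma>_W) auto
  qed
qed

end

lemma continuous_map_to_discrete_if_locally_constant:
  assumes "\<And>x. x \<in> topspace X \<Longrightarrow> \<exists>U. openin X U \<and> x \<in> U \<and> (\<forall>y\<in>U. f y = f x)"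
  shows "continuous_map X (discrete_topology UNIV) f"
proof -
  have "openin X {x \<in> topspace X. f x \<in> S}" for S
  proof (subst openin_subopen, intro ballI)
    fix x assume x: "x \<in> {x \<in> topspace X. f x \<in> S}"
    then obtain U where U: "openin X U" "x \<in> U" "\<forall>y\<in>U. f y = f x"
      using assms by blast
    have "U \<subseteq> {x \<in> topspace X. f x \<in> S}"
    proof
      fix y assume y: "y \<in> U"
      then have "f y = f x"
        using U(3) by blast
      with x y openin_subset [OF U(1)] show "y \<in> {x \<in> topspace X. f x \<in> S}"
        by auto
    qed
    with U show "\<exists>U. openin X U \<and> x \<in> U \<and> U \<subseteq> {x \<in> topspace X. f x \<in> S}"
      by blast
  qed
  then show ?thesis
    by (simp add: continuous_map_def)
qed

locale groupoid_section_topology =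
  groupoid_section G "topspace T" src tgt ide iv mul \<sigma>
  for G :: "'a set" and T :: "'b topology" and src tgt :: "'a \<Rightarrow> 'b" and ide :: "'b \<Rightarrow> 'a"
    and iv :: "'a \<Rightarrow> 'a" and mul :: "'a \<Rightarrow> 'a \<Rightarrow> 'a" and \<sigma> :: "'b \<Rightarrow> 'a"
begin

definition chart :: "'a \<Rightarrow> 'b \<times> 'b \<times> 'a" where
  "chart a = (src a, tgt a, core a)"

definition chart_topology :: "'a topology" where
  "chart_topology =
     pullback_topology G chart (prod_topology T (prod_topology T (discrete_topology UNIV)))"

lemma topspace_chart_topology [simp]: "topspace chart_topology = G"
  unfolding chart_topology_def topspace_pullback_topology chart_def by auto

lemma continuous_map_chart:
  "continuous_map chart_topology (prod_topology T (prod_topology T (discrete_topology UNIV))) chart"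
  using continuous_map_pullback [OF continuous_map_id, of G chart]
  unfolding chart_topology_def by (simp only: id_comp)

lemma continuous_map_chart_topologyI:
  assumes "continuous_map Z (prod_topology T (prod_topology T (discrete_topology UNIV))) (chart \<circ> f)"
    and "f \<in> topspace Z \<rightarrow> G"
  shows "continuous_map Z chart_topology f"
  unfolding chart_topology_def
  by (rule continuous_map_pullback') (use assms in \<open>auto simp: Pi_iff\<close>)

lemma continuous_map_src: "continuous_map chart_topology T src"
  and continuous_map_tgt: "continuous_map chart_topology T tgt"
  and continuous_map_core: "continuous_map chart_topology (discrete_topology UNIV) core"
  using continuous_map_fst_of [OF continuous_map_chart]
    continuous_map_fst_of [OF continuous_map_snd_of [OF continuous_map_chart]]
    continuous_map_snd_of [OF continuous_map_snd_of [OF continuous_map_chart]]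
  by (simp_all only: o_def chart_def fst_conv snd_conv)

lemma continuous_map_ide:
  assumes base_locally_constant:
    "\<And>y. y \<in> topspace T \<Longrightarrow> \<exists>U. openin T U \<and> y \<in> U \<and> (\<forall>z\<in>U. src (\<sigma> z) = src (\<sigma> y))"
  shows "continuous_map T chart_topology ide"
proof (rule continuous_map_chart_topologyI)
  have "continuous_map T (discrete_topology UNIV) (\<lambda>y. ide (src (\<sigma> y)))"
    using base_locally_constant by (intro continuous_map_to_discrete_if_locally_constant) metis
  then have "continuous_map T (prod_topology T (prod_topology T (discrete_topology UNIV)))
      (\<lambda>y. (y, y, ide (src (\<sigma> y))))"
    by (intro continuous_map_pairedI continuous_map_id [unfolded id_def])
  then show "continuous_map T (prod_topology T (prod_topology T (discrete_topology UNIV))) (chart \<circ> ide)"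
    by (rule continuous_map_eq) (simp add: chart_def core_ide)
qed auto

lemma continuous_map_iv: "continuous_map chart_topology chart_topology iv"
proof (rule continuous_map_chart_topologyI)
  have "continuous_map chart_topology (discrete_topology UNIV) (\<lambda>a. iv (core a))"
    using continuous_map_compose [OF continuous_map_core, of "discrete_topology UNIV" iv]
    by (simp add: o_def)
  then have "continuous_map chart_topology (prod_topology T (prod_topology T (discrete_topology UNIV)))
      (\<lambda>a. (tgt a, src a, iv (core a)))"
    by (intro continuous_map_pairedI continuous_map_src continuous_map_tgt)
  then show "continuous_map chart_topology (prod_topology T (prod_topology T (discrete_topology UNIV)))
      (chart \<circ> iv)"
    by (rule continuous_map_eq) (simp add: chart_def core_iv)
qed auto

lemma continuous_map_mul:
  "continuous_map
     (subtopology (prod_topology chart_topology chart_topology)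
        {(a, b). a \<in> topspace chart_topology \<and> b \<in> topspace chart_topology \<and> tgt a = src b})
     chart_topology (\<lambda>(a, b). mul a b)"
  (is "continuous_map ?D _ _")
proof (rule continuous_map_chart_topologyI)
  have topspace_D: "topspace ?D = {(a, b). a \<in> G \<and> b \<in> G \<and> tgt a = src b}"
    by auto
  have "continuous_map ?D (prod_topology (discrete_topology UNIV) (discrete_topology UNIV))
      (\<lambda>p. (core (fst p), core (snd p)))"
    using continuous_map_core
    by (intro continuous_map_pairedI continuous_map_compose [OF continuous_map_subtopology_fst, unfolded o_def]
        continuous_map_compose [OF continuous_map_subtopology_snd, unfolded o_def])
  then have "continuous_map ?D (discrete_topology UNIV) (\<lambda>p. (core (fst p), core (snd p)))"
    by (simp flip: prod_topology_discrete_topology)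
  then have "continuous_map ?D (discrete_topology UNIV) (\<lambda>p. mul (core (fst p)) (core (snd p)))"
    using continuous_map_compose [where g = "\<lambda>(c, d). mul c d"] by (force simp: o_def)
  moreover have "continuous_map ?D T (\<lambda>p. src (fst p))" "continuous_map ?D T (\<lambda>p. tgt (snd p))"
    using continuous_map_compose [OF continuous_map_subtopology_fst continuous_map_src]
      continuous_map_compose [OF continuous_map_subtopology_snd continuous_map_tgt]
    by (simp_all add: o_def)
  ultimately have "continuous_map ?D (prod_topology T (prod_topology T (discrete_topology UNIV)))
      (\<lambda>p. (src (fst p), tgt (snd p), mul (core (fst p)) (core (snd p))))"
    by (intro continuous_map_pairedI)
  then show "continuous_map ?D (prod_topology T (prod_topology T (discrete_topology UNIV)))
      (chart \<circ> (\<lambda>(a, b). mul a b))"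
    by (rule continuous_map_eq) (auto simp: topspace_D chart_def core_mul)
  show "(\<lambda>(a, b). mul a b) \<in> topspace ?D \<rightarrow> G"
    unfolding topspace_D by auto
qed

lemma topological_groupoid_chart_topology:
  assumes "\<And>y. y \<in> topspace T \<Longrightarrow> \<exists>U. openin T U \<and> y \<in> U \<and> (\<forall>z\<in>U. src (\<sigma> z) = src (\<sigma> y))"
  shows "topological_groupoid chart_topology T src tgt ide iv mul"
  unfolding topological_groupoid_def
  using groupoid continuous_map_src continuous_map_tgt continuous_map_ide [OF assms]
    continuous_map_iv continuous_map_mul
  by simp

lemma openin_chart_topology_subgroupoid:
  assumes "wide_subgroupoid W G (topspace T) src tgt ide iv mul"
    and "\<And>y. y \<in> topspace T \<Longrightarrow> \<sigma> y \<in> W"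
  shows "openin chart_topology W"
proof -
  have "W = chart -` (topspace T \<times> topspace T \<times> W) \<inter> G"
    using core_in_subgroupoid_iff [OF assms] wide_subgroupoid_subset [OF assms(1)]
    unfolding chart_def by auto
  moreover have "openin (prod_topology T (prod_topology T (discrete_topology UNIV)))
      (topspace T \<times> topspace T \<times> W)"
    by (simp add: openin_prod_Times_iff)
  ultimately show ?thesis
    unfolding chart_topology_def openin_pullback_topology by blast
qed

end

lemma compatible_locally_trivial_orbits_open:
  assumes "compatible_locally_trivial T W src tgt ide" and "x \<in> topspace T"
  shows "\<exists>U. openin T U \<and> x \<in> U \<and> (\<forall>y\<in>U. \<exists>w\<in>W. src w = x \<and> tgt w = y)"
proof -
  obtain \<U> s where \<U>_open: "\<forall>U\<in>\<U>. openin T U" and \<U>_cover: "\<Union>\<U> = topspace T"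
    and sections: "\<forall>U\<in>\<U>. \<forall>x\<in>U. (\<forall>y\<in>U. s x U y \<in> star W src x \<and> tgt (s x U y) = y) \<and> s x U x = ide x"
    using assms(1) unfolding compatible_locally_trivial_def by metis
  obtain U where "U \<in> \<U>" "x \<in> U"
    using \<U>_cover assms(2) by blast
  then have "\<forall>y\<in>U. s x U y \<in> W \<and> src (s x U y) = x \<and> tgt (s x U y) = y"
    using sections unfolding star_def by simp
  with \<open>U \<in> \<U>\<close> \<open>x \<in> U\<close> \<U>_open show ?thesis
    by blast
qed

theorem topological_groupoid_if_subgroupoid_orbits_open:
  assumes G: "groupoid G (topspace T) src tgt ide iv mul"
    and W: "wide_subgroupoid W G (topspace T) src tgt ide iv mul"
    and orbits_open: "\<And>x. x \<in> topspace T \<Longrightarrow>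
      \<exists>U. openin T U \<and> x \<in> U \<and> (\<forall>y\<in>U. \<exists>w\<in>W. src w = x \<and> tgt w = y)"
  shows "\<exists>\<tau>. topspace \<tau> = G \<and> topological_groupoid \<tau> T src tgt ide iv mul \<and> openin \<tau> W"
proof -
  interpret groupoid_on G "topspace T" src tgt ide iv mul
    using G by unfold_locales
  obtain \<sigma> where \<sigma>: "\<And>y. y \<in> topspace T \<Longrightarrow> \<sigma> y \<in> W \<and> tgt (\<sigma> y) = y"
    and base_locally_constant:
      "\<And>y. y \<in> topspace T \<Longrightarrow> \<exists>U. openin T U \<and> y \<in> U \<and> (\<forall>z\<in>U. src (\<sigma> z) = src (\<sigma> y))"
    using subgroupoid_section_with_locally_constant_base [OF W orbits_open] by blast
  interpret groupoid_section_topology G T src tgt ide iv mul \<sigma>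
    using \<sigma> wide_subgroupoid_subset [OF W] by unfold_locales auto
  show ?thesis
    using topological_groupoid_chart_topology [OF base_locally_constant]
      openin_chart_topology_subgroupoid [OF W] \<sigma>
    by (intro exI [of _ chart_topology]) simp
qed

theorem mainTheorem4:
  fixes T :: "'b topology" and G W :: "'a set"
    and src tgt :: "'a \<Rightarrow> 'b" and ide :: "'b \<Rightarrow> 'a"
    and iv :: "'a \<Rightarrow> 'a" and mul :: "'a \<Rightarrow> 'a \<Rightarrow> 'a"
  assumes "groupoid G (topspace T) src tgt ide iv mul"
    and "wide_subgroupoid W G (topspace T) src tgt ide iv mul"
    and "compatible_locally_trivial T W src tgt ide"
  shows "\<exists>\<tau> :: 'a topology. topspace \<tau> = G \<and>
           topological_groupoid \<tau> T src tgt ide iv mul \<and> openin \<tau> W"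
  using assms(1,2) compatible_locally_trivial_orbits_open [OF assms(3)]
  by (rule topological_groupoid_if_subgroupoid_orbits_open)

end
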